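(* With $\mathbb P$-probability one, the sequence of probability measures $Q_t^\omega$, $t=1,2,\dots$, on $\mathbb R^{N^2+N}$ is exponentially tight, i.e., for every $M<\infty$ there is a compact $K\subseteq\mathbb R^{N^2+N}$ with $\limsup_{t\to\infty}\frac1t\log Q_t^\omega(K^c)\le-M$.
   Context: $V=\{1,\dots,N\}$; $P$ row-stochastic irreducible aperiodic with stationary distribution $\pi>0$. $\mathcal S^t=\{s^t\in V^t:\pi_{s_1}\prod_{k<t}P_{s_ks_{k+1}}>0\}$, $C_t=|\mathcal S^t|$. $K_{ij}(s^t)=|\{1\le k\le t:s_k=i,s_{k+1}=j\}|$ with $s_{t+1}:=s_1$, $\Theta_t(s^t)=K(s^t)/t$. On $(\Omega,\mathcal F,\mathbb P)$, for each $t$ and $s^t\in\mathcal S^t$, $Z_{s^t}\in\mathbb R^t$ has i.i.d. $\mathcal N(0,1)$ entries, all these vectors (over all $s^t$, all $t$) mutually independent. $\mathcal Z^\omega_{t,i}(s^t)=\frac1t\sum_{k\le t:s_k=i}Z_{s^t,k}(\omega)$ ($0$ if the sum is empty). $Q_t^\omega(B)=\frac1{C_t}|\{s^t\in\mathcal S^t:(\Theta_t(s^t),\mathcal Z_t^\omega(s^t))\in B\}|$. *)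

theory Defs
  imports "HOL-Probability.Probability"
begin

text \<open>The state space V is the finite type 'v (N = CARD('v)); P :: 'v => 'v => real.\<close>

fun mpow :: "('v::finite \<Rightarrow> 'v \<Rightarrow> real) \<Rightarrow> nat \<Rightarrow> 'v \<Rightarrow> 'v \<Rightarrow> real" where
  "mpow P 0 i j = (if i = j then 1 else 0)"
| "mpow P (Suc n) i j = (\<Sum>k\<in>UNIV. mpow P n i k * P k j)"

definition row_stochastic :: "('v::finite \<Rightarrow> 'v \<Rightarrow> real) \<Rightarrow> bool" where
  "row_stochastic P \<longleftrightarrow> (\<forall>i j. P i j \<ge> 0) \<and> (\<forall>i. (\<Sum>j\<in>UNIV. P i j) = 1)"

definition irreducible_chain :: "('v::finite \<Rightarrow> 'v \<Rightarrow> real) \<Rightarrow> bool" where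
  "irreducible_chain P \<longleftrightarrow> (\<forall>i j. \<exists>n>0. mpow P n i j > 0)"

definition aperiodic_chain :: "('v::finite \<Rightarrow> 'v \<Rightarrow> real) \<Rightarrow> bool" where
  "aperiodic_chain P \<longleftrightarrow> (\<forall>i. Gcd {n::nat. n > 0 \<and> mpow P n i i > 0} = 1)"

definition stationary_dist :: "('v::finite \<Rightarrow> 'v \<Rightarrow> real) \<Rightarrow> ('v \<Rightarrow> real) \<Rightarrow> bool" where
  "stationary_dist P \<pi> \<longleftrightarrow> (\<forall>i. \<pi> i \<ge> 0) \<and> (\<Sum>i\<in>UNIV. \<pi> i) = 1
      \<and> (\<forall>j. (\<Sum>i\<in>UNIV. \<pi> i * P i j) = \<pi> j)"

text \<open>Admissible paths of length t (0-based list indices: s!0 = s_1, ..., s!(t-1) = s_t).\<close>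
definition paths :: "('v::finite \<Rightarrow> 'v \<Rightarrow> real) \<Rightarrow> ('v \<Rightarrow> real) \<Rightarrow> nat \<Rightarrow> 'v list set" where
  "paths P \<pi> t = {s. length s = t \<and> \<pi> (s!0) * (\<Prod>k<t - 1. P (s!k) (s!(k+1))) > 0}"

text \<open>Cyclic pair counts K_ij(s) (with s_{t+1} := s_1) and empirical pair measure Theta_t.\<close>
definition pair_count :: "'v list \<Rightarrow> 'v \<Rightarrow> 'v \<Rightarrow> nat" where
  "pair_count s i j = card {k. k < length s \<and> s!k = i \<and> s!((k+1) mod length s) = j}"

definition Theta :: "'v::finite list \<Rightarrow> real^('v \<times> 'v)" where
  "Theta s = (\<chi> ij. real (pair_count s (fst ij) (snd ij)) / real (length s))"

text \<open>\<Z>_{t,i}(s) = (1/t) \<Sum>_{k : s_k = i} Z_{s,k}(\<omega>); Z t s k is the k-th (0-based) entry of Z_{s^t}.\<close>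
definition Zemp :: "(nat \<Rightarrow> 'v list \<Rightarrow> nat \<Rightarrow> 'a \<Rightarrow> real) \<Rightarrow> 'a \<Rightarrow> 'v::finite list \<Rightarrow> real^'v" where
  "Zemp Z \<omega> s = (\<chi> i. (\<Sum>k\<in>{k. k < length s \<and> s!k = i}. Z (length s) s k \<omega>) / real (length s))"

definition Qemp :: "('v::finite \<Rightarrow> 'v \<Rightarrow> real) \<Rightarrow> ('v \<Rightarrow> real) \<Rightarrow> (nat \<Rightarrow> 'v list \<Rightarrow> nat \<Rightarrow> 'a \<Rightarrow> real)
     \<Rightarrow> nat \<Rightarrow> 'a \<Rightarrow> ((real^('v \<times> 'v)) \<times> (real^'v)) set \<Rightarrow> real" where
  "Qemp P \<pi> Z t \<omega> B = real (card {s \<in> paths P \<pi> t. (Theta s, Zemp Z \<omega> s) \<in> B}) / real (card (paths P \<pi> t))"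

definition eln :: "real \<Rightarrow> ereal" where
  "eln x = (if x = 0 then -\<infinity> else ereal (ln x))"

end

theory Submission
  imports Defs
begin

text \<open>By Chernoff's bound and independence, a sum of t absolute values of standard Gaussians
  exceeds R t with probability at most e^{-Rt} (2 e^{1/2})^t. There are at most N^t paths of
  length t, so for R = ln (2 e^{1/2} N) + 1 the probability that the Gaussian sum of some path
  of length t exceeds R t is at most e^{-t}, and by Borel-Cantelli almost surely this happens for
  only finitely many t. For such \<omega> all the vectors Zemp are bounded (their averages are below R
  from some time on), while Theta always lies in the unit cube. Hence one ball K contains the
  support of every Q_t, so Q_t(K^c) = 0 and the limsup is -\<infinity>.\<close>

lemma nn_integral_normal_density:
  assumes "0 < \<sigma>"
  shows "(\<integral>\<^sup>+x. ennreal (normal_density \<mu> \<sigma> x) \<partial>lborel) = 1"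
  using assms nn_integral_eq_integral[of lborel "normal_density \<mu> \<sigma>"] by simp

lemma std_normal_density_mult_exp:
  "std_normal_density x * exp (a * x) = exp (a\<^sup>2 / 2) * normal_density a 1 x"
  unfolding normal_density_def by (simp add: mult_exp_exp power2_eq_square field_simps)

lemma nn_integral_exp_abs_std_normal_le:
  assumes "distributed M lborel X std_normal_density"
  shows "(\<integral>\<^sup>+\<omega>. ennreal (exp \<bar>X \<omega>\<bar>) \<partial>M) \<le> ennreal (2 * exp (1/2))"
proof -
  have shifted: "(\<integral>\<^sup>+x. ennreal (exp (1/2) * normal_density \<mu> 1 x) \<partial>lborel) = ennreal (exp (1/2))" for \<mu>
    by (simp add: ennreal_mult nn_integral_cmult nn_integral_normal_density)
  have "(\<integral>\<^sup>+\<omega>. ennreal (exp \<bar>X \<omega>\<bar>) \<partial>M)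
      = (\<integral>\<^sup>+x. ennreal (std_normal_density x) * ennreal (exp \<bar>x\<bar>) \<partial>lborel)"
    using distributed_nn_integral[OF assms, of "\<lambda>x. ennreal (exp \<bar>x\<bar>)"] by simp
  also have "\<dots> \<le> (\<integral>\<^sup>+x. ennreal (exp (1/2) * normal_density 1 1 x)
                      + ennreal (exp (1/2) * normal_density (-1) 1 x) \<partial>lborel)"
  proof (rule nn_integral_mono)
    fix x
    have "std_normal_density x * exp \<bar>x\<bar>
        \<le> std_normal_density x * exp (1 * x) + std_normal_density x * exp ((-1) * x)"
      by (cases "x \<ge> 0") (auto simp: distrib_left[symmetric] intro!: mult_left_mono)
    also have "\<dots> = exp (1/2) * normal_density 1 1 x + exp (1/2) * normal_density (-1) 1 x"
      unfolding std_normal_density_mult_exp by simp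
    finally show "ennreal (std_normal_density x) * ennreal (exp \<bar>x\<bar>)
        \<le> ennreal (exp (1/2) * normal_density 1 1 x) + ennreal (exp (1/2) * normal_density (-1) 1 x)"
      by (simp add: ennreal_mult[symmetric] ennreal_plus[symmetric] del: ennreal_plus)
  qed
  also have "\<dots> = ennreal (2 * exp (1/2))"
    by (subst nn_integral_add) (auto simp: shifted simp del: ennreal_plus simp add: ennreal_plus[symmetric])
  finally show ?thesis .
qed

lemma (in prob_space) indep_std_normal_sum_abs_tail:
  assumes "finite I" and ind: "indep_vars (\<lambda>_. borel) X I"
    and std: "\<And>i. i \<in> I \<Longrightarrow> distributed M lborel (X i) std_normal_density"
  shows "emeasure M {\<omega>\<in>space M. a \<le> (\<Sum>i\<in>I. \<bar>X i \<omega>\<bar>)} \<le> ennreal (exp (-a) * (2 * exp (1/2)) ^ card I)"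
proof -
  have [measurable]: "X i \<in> borel_measurable M" if "i \<in> I" for i
    using std[OF that] distributed_measurable by (metis measurable_lborel1)
  have "(\<lambda>x. (\<Sum>i\<in>I. \<bar>X i x\<bar>) * indicator (space M) x) \<in> borel_measurable M"
    by measurable
  then have "emeasure M {\<omega>\<in>space M. a \<le> (\<Sum>i\<in>I. \<bar>X i \<omega>\<bar>)}
      \<le> ennreal (exp (-1 * a)) * (\<integral>\<^sup>+x. ennreal (exp (1 * (\<Sum>i\<in>I. \<bar>X i x\<bar>))) * indicator (space M) x \<partial>M)"
    by (intro Chernoff_ineq_nn_integral_ge) auto
  also have "(\<integral>\<^sup>+x. ennreal (exp (1 * (\<Sum>i\<in>I. \<bar>X i x\<bar>))) * indicator (space M) x \<partial>M)
      = (\<integral>\<^sup>+x. (\<Prod>i\<in>I. ennreal (exp \<bar>X i x\<bar>)) \<partial>M)"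
    by (intro nn_integral_cong) (simp add: exp_sum \<open>finite I\<close> prod_ennreal)
  also have "\<dots> = (\<Prod>i\<in>I. \<integral>\<^sup>+x. ennreal (exp \<bar>X i x\<bar>) \<partial>M)"
    by (intro indep_vars_nn_integral \<open>finite I\<close> indep_vars_compose2[OF ind]) auto
  also have "\<dots> \<le> (\<Prod>i\<in>I. ennreal (2 * exp (1/2)))"
    by (intro prod_mono_ennreal nn_integral_exp_abs_std_normal_le std)
  also have "ennreal (exp (-1 * a)) * \<dots> = ennreal (exp (-a) * (2 * exp (1/2)) ^ card I)"
    by (simp add: prod_ennreal ennreal_power ennreal_mult power_mult_distrib del: ennreal_mult_le_mult_iff)
       (simp add: ennreal_power[symmetric])
  finally show ?thesis by (simp add: mult_left_mono)
qed

lemma finite_lists_length_eq_UNIV: "finite {s :: 'v::finite list. length s = t}"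
  using finite_lists_length_eq[of "UNIV :: 'v set" t] by simp

lemma card_lists_length_eq_UNIV: "card {s :: 'v::finite list. length s = t} = CARD('v) ^ t"
  using card_lists_length_eq[of "UNIV :: 'v set" t] by simp

lemma (in prob_space) measure_some_sum_abs_indep_std_normal_ge:
  fixes S :: "nat \<Rightarrow> 'v::finite list set" and Z :: "nat \<Rightarrow> 'v list \<Rightarrow> nat \<Rightarrow> 'a \<Rightarrow> real"
  assumes S_length: "\<And>t. S t \<subseteq> {s. length s = t}"
    and ind: "indep_vars (\<lambda>_. borel) (\<lambda>(t, s, k). Z t s k) {(t, s, k). s \<in> S t \<and> k < t}"
    and std: "\<And>t s k. s \<in> S t \<Longrightarrow> k < t \<Longrightarrow> distributed M lborel (Z t s k) std_normal_density"
  shows "measure M (\<Union>s\<in>S t. {\<omega>\<in>space M. r * real t \<le> (\<Sum>k<t. \<bar>Z t s k \<omega>\<bar>)})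
      \<le> (real CARD('v) * (2 * exp (1/2))) ^ t * exp (- r * real t)"
proof -
  define C :: real where "C = 2 * exp (1/2)"
  define E where "E s = {\<omega>\<in>space M. r * real t \<le> (\<Sum>k<t. \<bar>Z t s k \<omega>\<bar>)}" for s
  have [measurable]: "Z t s k \<in> borel_measurable M" if "s \<in> S t" "k < t" for s k
    using std[OF that] distributed_measurable by (metis measurable_lborel1)
  have E_sets: "E s \<in> sets M" if "s \<in> S t" for s
    unfolding E_def using that by measurable
  have E_bound: "measure M (E s) \<le> C ^ t * exp (- r * real t)" if s: "s \<in> S t" for s
  proof -
    define I where "I = (\<lambda>k. (t, s, k)) ` {..<t}"
    have inj: "inj_on (\<lambda>k. (t, s, k)) {..<t}" by (auto simp: inj_on_def)
    have ind_I: "indep_vars (\<lambda>_. borel) (\<lambda>(t, s, k). Z t s k) I"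
      by (rule indep_vars_subset[OF ind]) (auto simp: I_def s)
    have "emeasure M {\<omega>\<in>space M. r * real t \<le> (\<Sum>i\<in>I. \<bar>(\<lambda>(t, s, k). Z t s k) i \<omega>\<bar>)}
        \<le> ennreal (exp (- (r * real t)) * C ^ card I)"
      unfolding C_def by (rule indep_std_normal_sum_abs_tail[OF _ ind_I]) (auto simp: I_def intro!: std s)
    moreover have "(\<Sum>i\<in>I. \<bar>(\<lambda>(t, s, k). Z t s k) i \<omega>\<bar>) = (\<Sum>k<t. \<bar>Z t s k \<omega>\<bar>)" for \<omega>
      unfolding I_def by (subst sum.reindex[OF inj]) auto
    moreover have "card I = t" unfolding I_def using card_image[OF inj] by simp
    ultimately have "emeasure M (E s) \<le> ennreal (C ^ t * exp (- r * real t))"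
      by (simp add: E_def mult.commute)
    then show ?thesis
      by (simp add: emeasure_eq_measure C_def del: ennreal_le_iff2 mult_minus_left)
  qed
  have "finite (S t)"
    using S_length finite_lists_length_eq_UNIV by (rule finite_subset)
  then have "measure M (\<Union>s\<in>S t. E s) \<le> (\<Sum>s\<in>S t. measure M (E s))"
    by (intro finite_measure_subadditive_finite) (auto simp: E_sets)
  also have "\<dots> \<le> real (card (S t)) * (C ^ t * exp (- r * real t))"
    using sum_mono[of "S t", OF E_bound] by simp
  also have "\<dots> \<le> real CARD('v) ^ t * (C ^ t * exp (- r * real t))"
    using card_mono[OF finite_lists_length_eq_UNIV S_length]
    by (intro mult_right_mono) (auto simp: C_def card_lists_length_eq_UNIV simp flip: of_nat_power)
  finally show ?thesis
    by (simp add: E_def C_def power_mult_distrib mult.assoc)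
qed

lemma (in prob_space) AE_eventually_sum_abs_indep_std_normal_lt:
  fixes S :: "nat \<Rightarrow> 'v::finite list set" and Z :: "nat \<Rightarrow> 'v list \<Rightarrow> nat \<Rightarrow> 'a \<Rightarrow> real"
  assumes S_length: "\<And>t. S t \<subseteq> {s. length s = t}"
    and ind: "indep_vars (\<lambda>_. borel) (\<lambda>(t, s, k). Z t s k) {(t, s, k). s \<in> S t \<and> k < t}"
    and std: "\<And>t s k. s \<in> S t \<Longrightarrow> k < t \<Longrightarrow> distributed M lborel (Z t s k) std_normal_density"
  shows "\<exists>R. AE \<omega> in M. eventually (\<lambda>t. \<forall>s\<in>S t. (\<Sum>k<t. \<bar>Z t s k \<omega>\<bar>) < R * real t) sequentially"
proof -
  define NC :: real where "NC = real CARD('v) * (2 * exp (1/2))"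
  have "NC > 0" by (simp add: NC_def)
  define R where "R = ln NC + 1"
  define A where "A t = (\<Union>s\<in>S t. {\<omega>\<in>space M. R * real t \<le> (\<Sum>k<t. \<bar>Z t s k \<omega>\<bar>)})" for t
  have "finite (S t)" for t
    using S_length finite_lists_length_eq_UNIV by (rule finite_subset)
  moreover have [measurable]: "Z t s k \<in> borel_measurable M" if "s \<in> S t" "k < t" for t s k
    using std[OF that] distributed_measurable by (metis measurable_lborel1)
  ultimately have A_sets: "A t \<in> sets M" for t
    unfolding A_def by (intro sets.finite_UN) auto
  have A_bound: "measure M (A t) \<le> exp (-1) ^ t" for t
  proof -
    have "measure M (A t) \<le> NC ^ t * exp (- R * real t)"
      unfolding A_def NC_def by (rule measure_some_sum_abs_indep_std_normal_ge[OF S_length ind std])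
    also have "NC ^ t = exp (ln NC * real t)"
      using \<open>NC > 0\<close> by (simp add: exp_of_nat2_mult)
    also have "exp (ln NC * real t) * exp (- R * real t) = exp (real t * (-1))"
      by (simp only: exp_add[symmetric]) (simp add: R_def algebra_simps)
    also have "\<dots> = exp (-1) ^ t"
      by (rule exp_of_nat_mult)
    finally show ?thesis .
  qed
  have "summable (\<lambda>t. measure M (A t))"
    by (rule summable_comparison_test[of _ "\<lambda>t. exp (-1) ^ t"]) (auto intro!: A_bound summable_geometric)
  then have "AE \<omega> in M. eventually (\<lambda>t. \<omega> \<in> space M - A t) sequentially"
    by (intro borel_cantelli_AE1) (auto simp: A_sets emeasure_eq_measure)
  then have "AE \<omega> in M. eventually (\<lambda>t. \<forall>s\<in>S t. (\<Sum>k<t. \<bar>Z t s k \<omega>\<bar>) < R * real t) sequentially"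
    by (rule AE_mp) (auto intro!: AE_I2 elim!: eventually_mono simp: A_def not_le)
  then show ?thesis ..
qed

lemma paths_subset_length: "paths P \<pi> t \<subseteq> {s. length s = t}"
  by (auto simp: paths_def)

lemma finite_paths: "finite (paths P \<pi> t)"
  using paths_subset_length finite_lists_length_eq_UNIV by (rule finite_subset)

lemma abs_Theta_le_1: "\<bar>Theta s $ ij\<bar> \<le> 1"
proof -
  have "pair_count s (fst ij) (snd ij) \<le> length s"
    unfolding pair_count_def by (rule order.trans[OF card_mono[of "{..<length s}"]]) auto
  then show ?thesis
    unfolding Theta_def by (cases "length s = 0") (auto simp: divide_le_eq_1)
qed

lemma abs_Zemp_le: "\<bar>Zemp Z \<omega> s $ i\<bar> \<le> (\<Sum>k<length s. \<bar>Z (length s) s k \<omega>\<bar>) / real (length s)"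
proof -
  have "\<bar>\<Sum>k\<in>{k. k < length s \<and> s!k = i}. Z (length s) s k \<omega>\<bar> \<le> (\<Sum>k<length s. \<bar>Z (length s) s k \<omega>\<bar>)"
    by (rule order.trans[OF sum_abs]) (rule sum_mono2, auto)
  then show ?thesis
    by (simp add: Zemp_def divide_right_mono)
qed

lemma bounded_Zemp_if_eventually_sum_abs_lt:
  assumes "eventually (\<lambda>t. \<forall>s\<in>paths P \<pi> t. (\<Sum>k<t. \<bar>Z t s k \<omega>\<bar>) < R * real t) sequentially"
  shows "\<exists>B. \<forall>t. \<forall>s\<in>paths P \<pi> t. \<forall>i. \<bar>Zemp Z \<omega> s $ i\<bar> \<le> B"
proof -
  obtain T where T: "\<And>t s. t \<ge> T \<Longrightarrow> s \<in> paths P \<pi> t \<Longrightarrow> (\<Sum>k<t. \<bar>Z t s k \<omega>\<bar>) < R * real t"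
    using assms by (auto simp: eventually_sequentially)
  define early where "early = (\<Sum>t<T. \<Sum>s\<in>paths P \<pi> t. \<Sum>k<t. \<bar>Z t s k \<omega>\<bar>)"
  have "early \<ge> 0" unfolding early_def by (intro sum_nonneg) auto
  have "\<bar>Zemp Z \<omega> s $ i\<bar> \<le> \<bar>R\<bar> + early" if s: "s \<in> paths P \<pi> t" for t s i
  proof -
    define total where "total = (\<Sum>k<t. \<bar>Z t s k \<omega>\<bar>)"
    have "total \<ge> 0" unfolding total_def by (auto intro: sum_nonneg)
    have "\<bar>Zemp Z \<omega> s $ i\<bar> \<le> total / real t"
      using abs_Zemp_le[of Z \<omega> s i] s by (simp add: paths_def total_def)
    also have "\<dots> \<le> \<bar>R\<bar> + early"
    proof (cases "t \<ge> T")
      case True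
      have "total \<le> \<bar>R\<bar> * real t"
        using T[OF True s] abs_ge_self[of R] mult_right_mono[of R "\<bar>R\<bar>" "real t"]
        unfolding total_def by linarith
      then have "total / real t \<le> \<bar>R\<bar>"
        using \<open>total \<ge> 0\<close> by (cases "t = 0") (auto simp: divide_le_eq mult.commute)
      then show ?thesis using \<open>early \<ge> 0\<close> by linarith
    next
      case False
      have "total \<le> (\<Sum>s\<in>paths P \<pi> t. \<Sum>k<t. \<bar>Z t s k \<omega>\<bar>)"
        unfolding total_def by (intro member_le_sum s finite_paths) (auto intro: sum_nonneg)
      also have "\<dots> \<le> early"
        unfolding early_def using False by (intro member_le_sum) (auto intro!: sum_nonneg)
      moreover have "total / real t \<le> total"
        using \<open>total \<ge> 0\<close> mult_left_mono[of 1 "real t" total]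
        by (cases "t = 0") (auto simp: divide_le_eq)
      ultimately show ?thesis by linarith
    qed
    finally show ?thesis .
  qed
  then show ?thesis by blast
qed

lemma Theta_Zemp_in_cball:
  fixes s :: "'v::finite list"
  assumes "\<And>i. \<bar>Zemp Z \<omega> s $ i\<bar> \<le> B"
  shows "(Theta s, Zemp Z \<omega> s) \<in> cball 0 (real CARD('v \<times> 'v) + real CARD('v) * B)"
proof -
  have "norm (Theta s, Zemp Z \<omega> s) \<le> norm (Theta s) + norm (Zemp Z \<omega> s)"
    by (rule norm_Pair_le)
  also have "\<dots> \<le> (\<Sum>ij\<in>UNIV. \<bar>Theta s $ ij\<bar>) + (\<Sum>i\<in>UNIV. \<bar>Zemp Z \<omega> s $ i\<bar>)"
    by (intro add_mono norm_le_l1_cart)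
  also have "\<dots> \<le> (\<Sum>ij\<in>(UNIV :: ('v \<times> 'v) set). 1) + (\<Sum>i\<in>(UNIV :: 'v set). B)"
    by (intro add_mono sum_mono abs_Theta_le_1 assms)
  finally show ?thesis by simp
qed

lemma limsup_eln_Qemp_compl_eq_MInf:
  assumes "\<And>t s. s \<in> paths P \<pi> t \<Longrightarrow> (Theta s, Zemp Z \<omega> s) \<in> K"
  shows "limsup (\<lambda>t. eln (Qemp P \<pi> Z t \<omega> (- K)) / ereal (real t)) = -\<infinity>"
proof -
  have "{s \<in> paths P \<pi> t. (Theta s, Zemp Z \<omega> s) \<in> - K} = {}" for t
    using assms by auto
  then have "Qemp P \<pi> Z t \<omega> (- K) = 0" for t
    unfolding Qemp_def by (simp only:) simp
  then have "(\<lambda>t. eln (Qemp P \<pi> Z t \<omega> (- K)) / ereal (real t)) = (\<lambda>t. -\<infinity>)"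
    by (auto simp: eln_def fun_eq_iff divide_ereal_def)
  then show ?thesis
    by (simp add: Limsup_const)
qed

theorem lemma7:
  fixes P :: "'v::finite \<Rightarrow> 'v \<Rightarrow> real" and \<pi> :: "'v \<Rightarrow> real"
    and M :: "'a measure" and Z :: "nat \<Rightarrow> 'v list \<Rightarrow> nat \<Rightarrow> 'a \<Rightarrow> real"
  assumes "row_stochastic P" and "irreducible_chain P" and "aperiodic_chain P"
    and "stationary_dist P \<pi>" and "\<forall>i. \<pi> i > 0"
    and "prob_space M"
    and "prob_space.indep_vars M (\<lambda>_. borel) (\<lambda>(t, s, k). Z t s k)
           {(t, s, k). s \<in> paths P \<pi> t \<and> k < t}"
    and "\<And>t s k. s \<in> paths P \<pi> t \<Longrightarrow> k < t \<Longrightarrow>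
           distributed M lborel (Z t s k) std_normal_density"
  shows "AE \<omega> in M. \<forall>c::real. \<exists>K. compact K \<and>
           limsup (\<lambda>t. eln (Qemp P \<pi> Z t \<omega> (- K)) / ereal (real t)) \<le> ereal (- c)"
proof -
  interpret prob_space M by fact
  obtain R where "AE \<omega> in M. eventually
      (\<lambda>t. \<forall>s\<in>paths P \<pi> t. (\<Sum>k<t. \<bar>Z t s k \<omega>\<bar>) < R * real t) sequentially"
    using AE_eventually_sum_abs_indep_std_normal_lt[OF paths_subset_length assms(7,8)] by blast
  then show ?thesis
  proof (rule eventually_mono)
    fix \<omega> assume ev: "eventually (\<lambda>t. \<forall>s\<in>paths P \<pi> t. (\<Sum>k<t. \<bar>Z t s k \<omega>\<bar>) < R * real t) sequentially"
    then obtain B where "\<And>t s i. s \<in> paths P \<pi> t \<Longrightarrow> \<bar>Zemp Z \<omega> s $ i\<bar> \<le> B"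
      using bounded_Zemp_if_eventually_sum_abs_lt[where Z = Z and \<omega> = \<omega>, OF ev] by blast
    then have "limsup (\<lambda>t. eln (Qemp P \<pi> Z t \<omega> (- cball 0 (real CARD('v \<times> 'v) + real CARD('v) * B)))
        / ereal (real t)) = -\<infinity>"
      by (intro limsup_eln_Qemp_compl_eq_MInf Theta_Zemp_in_cball)
    then show "\<forall>c. \<exists>K. compact K \<and> limsup (\<lambda>t. eln (Qemp P \<pi> Z t \<omega> (- K)) / ereal (real t)) \<le> ereal (- c)"
      by (intro allI exI[where x = "cball 0 (real CARD('v \<times> 'v) + real CARD('v) * B)"]) simp
  qed
qed

end
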